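(* Let $R$ be a commutative Noetherian ring with unity and let $x,y$ be nonzero zero divisors of $R$. If $0\neq\operatorname{ann}(x)\subsetneq\operatorname{ann}(y)$, then $\deg[x]\le\deg[y]$ in $\Gamma_E(R)$.
   Context: For $x,y\in R$ write $x\sim y$ iff $\operatorname{ann}(x)=\operatorname{ann}(y)$; $[x]$ denotes the equivalence class of $x$. Let $Z^*(R)$ be the set of nonzero zero divisors of $R$. The graph $\Gamma_E(R)$ is the simple graph whose vertices are the classes $[x]$ with $x\in Z^*(R)$, two distinct vertices $[x],[y]$ being adjacent iff $xy=0$. The degree $\deg[x]$ of a vertex is the number (possibly infinite) of vertices adjacent to it. *)

theory Defs
  imports Main
begin

definition is_ideal :: "'a::comm_ring_1 set \<Rightarrow> bool" where
  "is_ideal I \<longleftrightarrow> 0 \<in> I \<and> (\<forall>a\<in>I. \<forall>b\<in>I. a + b \<in> I) \<and> (\<forall>r. \<forall>a\<in>I. r * a \<in> I)"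

definition noetherian :: "'a::comm_ring_1 itself \<Rightarrow> bool" where
  "noetherian _ \<longleftrightarrow> (\<forall>I :: nat \<Rightarrow> 'a set. (\<forall>n. is_ideal (I n)) \<and> (\<forall>n. I n \<subseteq> I (Suc n))
      \<longrightarrow> (\<exists>N. \<forall>n\<ge>N. I n = I N))"

definition ann :: "'a::comm_ring_1 \<Rightarrow> 'a set" where
  "ann x = {r. r * x = 0}"

definition zdiv_star :: "'a::comm_ring_1 set" where
  "zdiv_star = {x. x \<noteq> 0 \<and> (\<exists>y. y \<noteq> 0 \<and> x * y = 0)}"

definition ann_class :: "'a::comm_ring_1 \<Rightarrow> 'a set" where
  "ann_class x = {z. ann z = ann x}"

definition gammaE_vertices :: "'a::comm_ring_1 set set" where
  "gammaE_vertices = ann_class ` zdiv_star"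

text \<open>Adjacency: distinct vertices [x],[y] with xy = 0 (independent of representatives).\<close>
definition gammaE_adj :: "'a::comm_ring_1 set \<Rightarrow> 'a set \<Rightarrow> bool" where
  "gammaE_adj C D \<longleftrightarrow> C \<in> gammaE_vertices \<and> D \<in> gammaE_vertices \<and> C \<noteq> D \<and>
     (\<exists>a\<in>C. \<exists>b\<in>D. a * b = 0)"

text \<open>Neighbourhood of a vertex; the degree is its cardinality (possibly infinite).\<close>
definition gammaE_nbhd :: "'a::comm_ring_1 set \<Rightarrow> 'a set set" where
  "gammaE_nbhd C = {D. gammaE_adj C D}"

end

theory Submission
  imports Defs
begin

text \<open>Every neighbour of [x] is a class [z] with xz = 0, and then also yz = 0 because
  ann x \<subseteq> ann y; so the neighbourhood of [x] lies in that of [y], except possibly for [y]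
  itself. If [y] is a neighbour of [x], then by symmetry [x] is a neighbour of [y] but not of
  itself, so replacing [y] by [x] gives an injection of the neighbourhood of [x] into that
  of [y].\<close>

lemma ann_class_eq_iff: "ann_class u = ann_class v \<longleftrightarrow> ann u = ann v"
  by (auto simp: ann_class_def)

lemma gammaE_adj_sym: "gammaE_adj C D \<Longrightarrow> gammaE_adj D C"
  unfolding gammaE_adj_def by (metis mult.commute)

lemma mem_gammaE_nbhd_iff:
  fixes u :: "'a::comm_ring_1"
  assumes "u \<in> zdiv_star"
  shows "D \<in> gammaE_nbhd (ann_class u) \<longleftrightarrow>
    (\<exists>z\<in>zdiv_star. D = ann_class z \<and> ann z \<noteq> ann u \<and> u * z = 0)"
proof
  assume "D \<in> gammaE_nbhd (ann_class u)"
  hence adj: "gammaE_adj (ann_class u) D" by (simp add: gammaE_nbhd_def)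
  then obtain z where z: "z \<in> zdiv_star" "D = ann_class z"
    by (auto simp: gammaE_adj_def gammaE_vertices_def)
  from adj obtain a b where ab: "a \<in> ann_class u" "b \<in> D" "a * b = 0"
    by (auto simp: gammaE_adj_def)
  have "b \<in> ann a" using ab(3) by (simp add: ann_def mult.commute)
  hence "b \<in> ann u" using ab(1) by (simp add: ann_class_def)
  hence "u \<in> ann b" by (simp add: ann_def mult.commute)
  hence "u \<in> ann z" using ab(2) z(2) by (simp add: ann_class_def)
  with z adj show "\<exists>z\<in>zdiv_star. D = ann_class z \<and> ann z \<noteq> ann u \<and> u * z = 0"
    by (auto simp: gammaE_adj_def ann_def ann_class_eq_iff)
next
  assume "\<exists>z\<in>zdiv_star. D = ann_class z \<and> ann z \<noteq> ann u \<and> u * z = 0"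
  then obtain z where "z \<in> zdiv_star" "D = ann_class z" "ann z \<noteq> ann u" "u * z = 0"
    by blast
  moreover have "u \<in> ann_class u" "z \<in> ann_class z" by (auto simp: ann_class_def)
  ultimately show "D \<in> gammaE_nbhd (ann_class u)"
    using assms unfolding gammaE_nbhd_def gammaE_adj_def gammaE_vertices_def
    by (auto simp: ann_class_eq_iff)
qed

lemma gammaE_nbhd_diff_subset_if_ann_subset:
  fixes x y :: "'a::comm_ring_1"
  assumes "x \<in> zdiv_star" "y \<in> zdiv_star" "ann x \<subseteq> ann y"
  shows "gammaE_nbhd (ann_class x) - {ann_class y} \<subseteq> gammaE_nbhd (ann_class y)"
proof
  fix D assume D: "D \<in> gammaE_nbhd (ann_class x) - {ann_class y}"
  then obtain z where z: "z \<in> zdiv_star" "D = ann_class z" "x * z = 0"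
    using mem_gammaE_nbhd_iff[OF assms(1)] by blast
  have "y * z = 0"
    using z(3) assms(3) by (auto simp: ann_def mult.commute)
  with z D show "D \<in> gammaE_nbhd (ann_class y)"
    using mem_gammaE_nbhd_iff[OF assms(2)] by (auto simp: ann_class_eq_iff)
qed

lemma card_of_ordLeq_if_diff_subset:
  assumes "A - {b} \<subseteq> B" and "a \<notin> A" and "b \<in> A \<Longrightarrow> a \<in> B"
  shows "(card_of A, card_of B) \<in> ordLeq"
proof -
  let ?f = "id(b := a)"
  have "inj_on ?f A" using assms(2) by (auto simp: inj_on_def)
  moreover have "?f ` A \<subseteq> B" using assms(1,3) by auto
  ultimately show ?thesis using card_of_ordLeq by blast
qed

theorem proposition2p1:
  fixes x y :: "'a::comm_ring_1"
  assumes "noetherian TYPE('a)"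
    and "x \<in> zdiv_star" and "y \<in> zdiv_star"
    and "ann x \<noteq> {0}" and "ann x \<subset> ann y"
  shows "(card_of (gammaE_nbhd (ann_class x)), card_of (gammaE_nbhd (ann_class y))) \<in> ordLeq"
proof (rule card_of_ordLeq_if_diff_subset)
  show "gammaE_nbhd (ann_class x) - {ann_class y} \<subseteq> gammaE_nbhd (ann_class y)"
    using gammaE_nbhd_diff_subset_if_ann_subset assms(2,3,5) by blast
  show "ann_class x \<notin> gammaE_nbhd (ann_class x)"
    by (simp add: gammaE_nbhd_def gammaE_adj_def)
  show "ann_class x \<in> gammaE_nbhd (ann_class y)"
    if "ann_class y \<in> gammaE_nbhd (ann_class x)"
    using that gammaE_adj_sym by (simp add: gammaE_nbhd_def)
qed

end
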